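(* Let $\mathbb{F}$ be an infinite field and $d\in\{1,2,3\}$. Then the set $S(d)$ is a minimal (with respect to inclusion) separating set for $R^{GL(2)}$.
   Context: Let $R=R_{2,d}=\mathbb{F}[x_{ij}(k)\mid 1\leq i,j\leq 2,\ 1\leq k\leq d]$ and let $X_k=(x_{ij}(k))$ be the $2\times 2$ generic matrices; $GL(2)$ acts by $g\cdot x_{ij}(k)=(g^{-1}X_kg)_{ij}$ and $R^{GL(2)}$ is the invariant algebra. Elements of $R$ are functions on $H=M(2)^{\oplus d}$ via $x_{ij}(k)(A_1,\dots,A_d)=(A_k)_{ij}$. Points $u,v\in H$ are separated by $S\subseteq R^{GL(2)}$ if $f(u)\neq f(v)$ for some $f\in S$, and separated if separated by $R^{GL(2)}$; $S$ is separating if every separated pair is separated by $S$. Here $S(d)$ consists of $\mathrm{tr}(X_i),\det(X_i)$ for $1\le i\le d$, $\mathrm{tr}(X_iX_j)$ for $1\le i<j\le d$, and $\mathrm{tr}(X_iX_jX_k)$ for $1\le i<j<k\le d$. *)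

theory Defs
  imports "HOL-Analysis.Analysis"
begin

type_synonym 'a mat2 = "'a^2^2"

text \<open>Points of H = M(2)^d: tuples (A_0,...,A_{d-1}) encoded as functions nat => 2x2 matrices
  which vanish at indices >= d (indices are 0-based).\<close>
definition H :: "nat \<Rightarrow> (nat \<Rightarrow> 'a::field mat2) set" where
  "H d = {u. \<forall>k\<ge>d. u k = 0}"

text \<open>Polynomial functions in the coordinates x_ij(k), k < d (elements of R = R_{2,d},
  viewed as functions on H).\<close>
inductive_set polyfun :: "nat \<Rightarrow> ((nat \<Rightarrow> 'a::field mat2) \<Rightarrow> 'a) set" for d :: nat where
  pf_const: "(\<lambda>u. c) \<in> polyfun d"
| pf_var: "k < d \<Longrightarrow> (\<lambda>u. u k $ i $ j) \<in> polyfun d"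
| pf_add: "f \<in> polyfun d \<Longrightarrow> g \<in> polyfun d \<Longrightarrow> (\<lambda>u. f u + g u) \<in> polyfun d"
| pf_mult: "f \<in> polyfun d \<Longrightarrow> g \<in> polyfun d \<Longrightarrow> (\<lambda>u. f u * g u) \<in> polyfun d"

definition inv_alg :: "nat \<Rightarrow> ((nat \<Rightarrow> 'a::field mat2) \<Rightarrow> 'a) set" where
  "inv_alg d = {f \<in> polyfun d. \<forall>g::'a mat2. \<forall>u \<in> H d. invertible g \<longrightarrow>
       f (\<lambda>k. matrix_inv g ** u k ** g) = f u}"

definition separated_by :: "((nat \<Rightarrow> 'a mat2) \<Rightarrow> 'a) set \<Rightarrow> (nat \<Rightarrow> 'a mat2) \<Rightarrow> (nat \<Rightarrow> 'a mat2) \<Rightarrow> bool" where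
  "separated_by S u v \<longleftrightarrow> (\<exists>f\<in>S. f u \<noteq> f v)"

definition separating :: "nat \<Rightarrow> ((nat \<Rightarrow> 'a::field mat2) \<Rightarrow> 'a) set \<Rightarrow> bool" where
  "separating d S \<longleftrightarrow> S \<subseteq> inv_alg d \<and>
     (\<forall>u\<in>H d. \<forall>v\<in>H d. separated_by (inv_alg d) u v \<longrightarrow> separated_by S u v)"

definition minimal_separating :: "nat \<Rightarrow> ((nat \<Rightarrow> 'a::field mat2) \<Rightarrow> 'a) set \<Rightarrow> bool" where
  "minimal_separating d S \<longleftrightarrow> separating d S \<and> (\<forall>S'. S' \<subset> S \<longrightarrow> \<not> separating d S')"

definition Sset :: "nat \<Rightarrow> ((nat \<Rightarrow> 'a::field mat2) \<Rightarrow> 'a) set" where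
  "Sset d = {(\<lambda>u. trace (u i)) | i. i < d}
          \<union> {(\<lambda>u. det (u i)) | i. i < d}
          \<union> {(\<lambda>u. trace (u i ** u j)) | i j. i < j \<and> j < d}
          \<union> {(\<lambda>u. trace (u i ** u j ** u k)) | i j k. i < j \<and> j < k \<and> k < d}"

end

theory Submission
  imports Defs "HOL-Computational_Algebra.Polynomial"
begin

text \<open>Let two triples \<open>(A, B, C)\<close>, \<open>(A', B', C')\<close> agree on \<open>S(3)\<close> (smaller \<open>d\<close> are padded with
  zero matrices). Then they agree on the determinants of the commutators \<open>[A,B], [A,C], [B,C],
  [A,B+C], [B,A+C]\<close>. If one of these, \<open>[P,R]\<close>, is non-singular, conjugating by a cyclic basis
  \<open>x, P x\<close> brings \<open>P\<close> to its companion matrix, and a vector in the kernel of the invariant pencil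
  \<open>R - \<alpha> - \<beta> P\<close> does the same for the primed pair, with a common image \<open>M\<close> of \<open>R\<close>; the third
  matrix is then fixed by its traces against \<open>1, P, R, P R\<close>, which span \<open>M\<^sub>2\<close>.
  If all five are singular, either the triple has a common eigenvector, hence is conjugate to an
  upper triangular triple whose orbit closure contains its diagonal part (this is where the field
  must be infinite), and diagonal triples with equal data differ only by swapping the diagonals;
  or the matrices commute and one of them, \<open>Q\<close>, has no eigenvector, so all lie in the field
  \<open>F[Q]\<close> and are fixed by trace, determinant and trace against \<open>Q\<close>.
  Minimality holds because every element of \<open>S(d)\<close> alone separates some pair of points.\<close>

definition mat2_of :: "'a::zero \<Rightarrow> 'a \<Rightarrow> 'a \<Rightarrow> 'a \<Rightarrow> 'a mat2" where
  "mat2_of a b c d = (\<chi> i j. if i = 1 then (if j = 1 then a else b) else (if j = 1 then c else d))"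

definition mat_of_cols :: "'a^2 \<Rightarrow> 'a^2 \<Rightarrow> 'a mat2" where
  "mat_of_cols x y = (\<chi> i j. if j = 1 then x $ i else y $ i)"

abbreviation commutator :: "'a::ring_1^'n^'n \<Rightarrow> 'a^'n^'n \<Rightarrow> 'a^'n^'n" where
  "commutator X Y \<equiv> X ** Y - Y ** X"

definition companion :: "'a::ring_1 \<Rightarrow> 'a \<Rightarrow> 'a mat2" where
  "companion t d = mat2_of 0 (- d) 1 t"

lemma mat2_of_nth [simp]:
  "mat2_of a b c d $ 1 $ 1 = a" "mat2_of a b c d $ 1 $ 2 = b"
  "mat2_of a b c d $ 2 $ 1 = c" "mat2_of a b c d $ 2 $ 2 = d"
  by (simp_all add: mat2_of_def)

lemma mat_of_cols_nth [simp]: "mat_of_cols x y $ i $ 1 = x $ i" "mat_of_cols x y $ i $ 2 = y $ i"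
  by (simp_all add: mat_of_cols_def)

lemma mat2_eq_iff:
  "A = B \<longleftrightarrow> A$1$1 = B$1$1 \<and> A$1$2 = B$1$2 \<and> A$2$1 = B$2$1 \<and> A$2$2 = B$2$2"
  for A B :: "'a mat2"
  by (auto simp: vec_eq_iff forall_2)

lemma vec2_eq_iff: "x = y \<longleftrightarrow> x$1 = y$1 \<and> x$2 = y$2" for x y :: "'a^2"
  by (auto simp: vec_eq_iff forall_2)

lemma mat2_mult_nth [simp]: "(A ** B) $ i $ j = A$i$1 * B$1$j + A$i$2 * B$2$j"
  for A B :: "'a::semiring_1 mat2"
  by (simp add: matrix_matrix_mult_def sum_2)

lemma mat2_mult_vec_nth [simp]: "(A *v x) $ i = A$i$1 * x$1 + A$i$2 * x$2"
  for A :: "'a::semiring_1 mat2"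
  by (simp add: matrix_vector_mult_def sum_2)

lemma mat2_mat_nth [simp]:
  "(mat k :: 'a::zero mat2) $ 1 $ 1 = k" "(mat k :: 'a mat2) $ 2 $ 2 = k"
  "(mat k :: 'a mat2) $ 1 $ 2 = 0" "(mat k :: 'a mat2) $ 2 $ 1 = 0"
  by (simp_all add: mat_def)

lemma trace_mat2: "trace A = A$1$1 + A$2$2" for A :: "'a::comm_semiring_1 mat2"
  by (simp add: trace_def sum_2)

lemmas mat2_simps = mat2_eq_iff trace_mat2 det_2

lemma mat_of_cols_mult_vec: "mat_of_cols x y *v vector [a, b] = a *s x + b *s y"
  for x y :: "'a::comm_ring_1^2"
  by (simp add: vec2_eq_iff algebra_simps)

context
  fixes X Y Z :: "'a::comm_ring_1 mat2"
begin

lemma trace_square: "trace (X ** X) = (trace X)\<^sup>2 - 2 * det X"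
  by (simp add: mat2_simps power2_eq_square algebra_simps)

lemma trace_mult_square: "trace (X ** Y ** Y) = trace Y * trace (X ** Y) - det Y * trace X"
  by (simp add: mat2_simps algebra_simps)

lemma trace_mult3_swap: "trace (X ** Z ** Y) = trace X * trace (Y ** Z) + trace Y * trace (X ** Z)
    + trace Z * trace (X ** Y) - trace X * trace Y * trace Z - trace (X ** Y ** Z)"
  by (simp add: mat2_simps algebra_simps)

lemma det_add_mat2: "det (X + Y) = det X + det Y + trace X * trace Y - trace (X ** Y)"
  by (simp add: mat2_simps algebra_simps)

lemma det_commutator: "det (commutator X Y) = 4 * det X * det Y - det X * (trace Y)\<^sup>2
    - det Y * (trace X)\<^sup>2 + trace X * trace Y * trace (X ** Y) - (trace (X ** Y))\<^sup>2"
  by (simp add: mat2_simps power2_eq_square algebra_simps)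

lemma det_sub_scalar: "det (X - mat c) = c\<^sup>2 - trace X * c + det X"
  by (simp add: mat2_simps power2_eq_square algebra_simps)

lemma commutator_square: "commutator X Y ** commutator X Y = mat (- det (commutator X Y))"
  by (simp add: mat2_simps algebra_simps)

lemma commutator_sandwich_left:
  "commutator X Y ** X ** commutator X Y = mat (det (commutator X Y)) ** (X - mat (trace X))"
  by (simp add: mat2_simps algebra_simps)

lemma commutator_sandwich_right:
  "commutator X Y ** Y ** commutator X Y = mat (det (commutator X Y)) ** (Y - mat (trace Y))"
  by (simp add: mat2_simps algebra_simps)

lemma det_sub_pencil:
  "det (Y - mat a - mat b ** X) = det Y + a\<^sup>2 + a * b * trace X + b\<^sup>2 * det X - a * trace Y
    - b * trace Y * trace X + b * trace (X ** Y)"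
  by (simp add: mat2_simps power2_eq_square algebra_simps)

lemma det_commutator_swap: "det (commutator Y X) = det (commutator X Y)"
  by (simp add: det_2 algebra_simps)

lemma mult_cyclic_basis:
  "X ** mat_of_cols x (X *v x) = mat_of_cols x (X *v x) ** companion (trace X) (det X)"
  by (simp add: companion_def mat2_simps algebra_simps)

end

lemma trace_mult3_cycle: "trace (X ** Y ** Z) = trace (Y ** Z ** X)"
  for X Y Z :: "'a::comm_semiring_1^'n^'n"
  by (metis matrix_mul_assoc trace_mul_sym)

definition mat_conj :: "'a::field^'n^'n \<Rightarrow> 'a^'n^'n \<Rightarrow> 'a^'n^'n" where
  "mat_conj g X = matrix_inv g ** X ** g"

lemma matrix_inv_mult:
  fixes g :: "'a::field^'n^'n"
  assumes "invertible g" shows "g ** matrix_inv g = mat 1" "matrix_inv g ** g = mat 1"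
  using someI_ex[OF assms[unfolded invertible_def]] by (simp_all add: matrix_inv_def)

context
  fixes g :: "'a::field^'n^'n"
  assumes g: "invertible g"
begin

lemma mult_mat_conj: "g ** mat_conj g X = X ** g"
  by (simp add: mat_conj_def matrix_mul_assoc matrix_inv_mult[OF g])

lemma mat_conj_eqI: "X ** g = g ** Y \<Longrightarrow> mat_conj g X = Y"
  by (metis mat_conj_def matrix_inv_mult(2)[OF g] matrix_mul_assoc matrix_mul_lid)

lemma mat_conj_mult: "mat_conj g (X ** Y) = mat_conj g X ** mat_conj g Y"
  by (simp add: mat_conj_def matrix_mul_assoc)
    (metis matrix_inv_mult(1)[OF g] matrix_mul_assoc matrix_mul_rid)

lemma trace_mat_conj: "trace (mat_conj g X) = trace X"
  by (metis mat_conj_def matrix_inv_mult(1)[OF g] matrix_mul_assoc matrix_mul_lid trace_mul_sym)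

lemma det_mat_conj: "det (mat_conj g X) = det X"
proof -
  have "det (matrix_inv g) * det g = 1" by (metis det_I det_mul matrix_inv_mult(2)[OF g])
  then show ?thesis by (simp add: mat_conj_def det_mul algebra_simps)
qed

lemma mat_conj_eq_0_iff: "mat_conj g X = 0 \<longleftrightarrow> X = 0"
  by (metis mult_mat_conj mat_conj_def matrix_inv_mult(1)[OF g] matrix_mul_assoc
      matrix_mul_rid times0_left times0_right)

lemma mat_conj_mult_vec: "X *v (g *v v) = g *v w \<Longrightarrow> mat_conj g X *v v = w"
  by (metis mat_conj_def matrix_inv_mult(2)[OF g] matrix_vector_mul_assoc matrix_vector_mul_lid)

end

lemma matrix_add_rdistrib: "(A + B) ** C = A ** C + B ** C"
  by (vector matrix_matrix_mult_def sum.distrib field_simps)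

lemma matrix_diff_rdistrib: "(A - B) ** C = A ** C - B ** C" for A B :: "'a::ring_1^'n^'m"
  by (vector matrix_matrix_mult_def sum_subtractf field_simps)

lemma matrix_diff_ldistrib: "C ** (A - B) = C ** A - C ** B" for A B :: "'a::ring_1^'n^'m"
  by (vector matrix_matrix_mult_def sum_subtractf field_simps)

lemma mat_conj_add: "mat_conj g (X + Y) = mat_conj g X + mat_conj g Y"
  by (simp add: mat_conj_def matrix_add_ldistrib matrix_add_rdistrib)

lemma mat_conj_diff: "mat_conj g (X - Y) = mat_conj g X - mat_conj g Y"
  by (simp add: mat_conj_def matrix_diff_ldistrib matrix_diff_rdistrib)

lemma mat_conj_commutator:
  "invertible g \<Longrightarrow> mat_conj g (commutator X Y) = commutator (mat_conj g X) (mat_conj g Y)"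
  by (simp add: mat_conj_diff mat_conj_mult)

subsection \<open>Kernels and eigenvectors\<close>

lemma det_eq_0_iff_kernel: "det A = 0 \<longleftrightarrow> (\<exists>x. x \<noteq> 0 \<and> A *v x = 0)"
  for A :: "'a::field^'n^'n"
  by (metis invertible_det_nz invertible_left_inverse matrix_left_invertible_ker)

lemma mat_mult_vec: "mat c *v x = c *s x" for x :: "'a::semiring_1^'n"
  by (vector matrix_vector_mult_def mat_def) (simp add: if_distrib if_distribR cong del: if_weak_cong)

lemma mult_vec_smult: "A *v (c *s x) = c *s (A *v x)" for A :: "'a::comm_semiring_1^'n^'m"
  by (simp add: vec_eq_iff matrix_vector_mult_def sum_distrib_left mult_ac)

definition eigvec :: "'a::field^'n^'n \<Rightarrow> 'a^'n \<Rightarrow> bool" where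
  "eigvec X x \<longleftrightarrow> x \<noteq> 0 \<and> (\<exists>\<mu>. X *v x = \<mu> *s x)"

lemma eigenvalue_iff_det: "(\<exists>x. x \<noteq> 0 \<and> X *v x = c *s x) \<longleftrightarrow> det (X - mat c) = 0"
  for X :: "'a::field^'n^'n"
  by (simp add: det_eq_0_iff_kernel matrix_vector_mult_diff_rdistrib mat_mult_vec)

lemma has_eigvec_iff_root: "(\<exists>x. eigvec X x) \<longleftrightarrow> (\<exists>c. c\<^sup>2 - trace X * c + det X = 0)"
  for X :: "'a::field mat2"
proof -
  have "(\<exists>x. eigvec X x) \<longleftrightarrow> (\<exists>c. \<exists>x. x \<noteq> 0 \<and> X *v x = c *s x)"
    by (auto simp: eigvec_def)
  also have "\<dots> \<longleftrightarrow> (\<exists>c. det (X - mat c) = 0)" by (simp only: eigenvalue_iff_det)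
  finally show ?thesis by (simp add: det_sub_scalar)
qed

lemma det_commutator_eq_0_if_common_eigvec:
  fixes X Y :: "'a::field^'n^'n"
  assumes "eigvec X x" "eigvec Y x"
  shows "det (commutator X Y) = 0"
proof -
  obtain \<mu> \<nu> where \<mu>: "X *v x = \<mu> *s x" and \<nu>: "Y *v x = \<nu> *s x" and "x \<noteq> 0"
    using assms by (auto simp: eigvec_def)
  have "commutator X Y *v x = X *v (Y *v x) - Y *v (X *v x)"
    by (simp add: matrix_vector_mult_diff_rdistrib matrix_vector_mul_assoc)
  also have "\<dots> = (\<nu> * \<mu>) *s x - (\<mu> * \<nu>) *s x"
    by (simp only: \<mu> \<nu> mult_vec_smult vector_smult_assoc)
  also have "\<dots> = 0" by (simp add: mult.commute)
  finally show ?thesis using \<open>x \<noteq> 0\<close> det_eq_0_iff_kernel by blast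
qed

lemma eigvec_smult:
  assumes "eigvec X x" "c \<noteq> 0" shows "eigvec X (c *s x)"
proof -
  obtain \<mu> where "x \<noteq> 0" "X *v x = \<mu> *s x" using assms(1) by (auto simp: eigvec_def)
  moreover from this have "c *s x \<noteq> 0" using assms(2) by (simp add: vec_eq_iff)
  moreover have "X *v (c *s x) = \<mu> *s (c *s x)" if "X *v x = \<mu> *s x"
    using that by (simp add: mult_vec_smult vector_smult_assoc mult.commute)
  ultimately show ?thesis by (auto simp: eigvec_def)
qed

lemma eigvec_add_cancel:
  assumes "eigvec (Y + Z) x" "eigvec Y x" shows "eigvec Z x"
proof -
  obtain \<mu> \<nu> where "(Y + Z) *v x = \<mu> *s x" "Y *v x = \<nu> *s x" "x \<noteq> 0"
    using assms unfolding eigvec_def by blast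
  then have "Z *v x = (\<mu> - \<nu>) *s x"
    by (simp add: matrix_vector_mult_add_rdistrib vector_sub_rdistrib eq_diff_eq add.commute)
  then show ?thesis using \<open>x \<noteq> 0\<close> unfolding eigvec_def by blast
qed

lemma dependent_if_det_mat_of_cols:
  fixes x y :: "'a::field^2"
  assumes "x \<noteq> 0" "det (mat_of_cols x y) = 0"
  shows "\<exists>c. y = c *s x"
proof (cases "x$1 = 0")
  case True
  then have "x$2 \<noteq> 0" using assms(1) by (auto simp: vec2_eq_iff)
  then show ?thesis using assms True by (intro exI[of _ "y$2 / x$2"]) (auto simp: vec2_eq_iff det_2)
next
  case False
  then show ?thesis using assms
    by (intro exI[of _ "y$1 / x$1"]) (auto simp: vec2_eq_iff det_2 field_simps)
qed

lemma eigvec_iff_det_cyclic: "eigvec X x \<longleftrightarrow> x \<noteq> 0 \<and> det (mat_of_cols x (X *v x)) = 0"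
  for X :: "'a::field mat2"
proof
  assume "eigvec X x"
  then obtain \<mu> where "x \<noteq> 0" "X *v x = \<mu> *s x" by (auto simp: eigvec_def)
  then show "x \<noteq> 0 \<and> det (mat_of_cols x (X *v x)) = 0" by (simp add: det_2)
next
  assume "x \<noteq> 0 \<and> det (mat_of_cols x (X *v x)) = 0"
  then show "eigvec X x" by (auto simp: eigvec_def dest: dependent_if_det_mat_of_cols)
qed

lemma det_mat_of_cols_kernel:
  fixes K :: "'a::field mat2"
  assumes "K \<noteq> 0" "K *v x = 0" "K *v y = 0"
  shows "det (mat_of_cols x y) = 0"
proof (rule ccontr)
  assume "det (mat_of_cols x y) \<noteq> 0"
  then have g: "invertible (mat_of_cols x y)" by (simp add: invertible_det_nz)
  have "K ** mat_of_cols x y = 0" using assms(2,3) by (simp add: mat2_eq_iff vec2_eq_iff)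
  have "K = K ** mat_of_cols x y ** matrix_inv (mat_of_cols x y)"
    by (simp only: matrix_mul_assoc[symmetric] matrix_inv_mult(1)[OF g] matrix_mul_rid)
  also have "\<dots> = 0" using \<open>K ** mat_of_cols x y = 0\<close> by simp
  finally show False using assms(1) by blast
qed

definition scalar_mat :: "'a::zero^'n^'n \<Rightarrow> bool" where
  "scalar_mat X \<longleftrightarrow> (\<exists>c. X = mat c)"

lemma cyclic_vector_exists:
  fixes X :: "'a::field mat2"
  assumes "\<not> scalar_mat X"
  shows "\<exists>x. det (mat_of_cols x (X *v x)) \<noteq> 0"
proof (rule ccontr)
  assume "\<not> ?thesis"
  then have "det (mat_of_cols x (X *v x)) = 0" for x by blast
  from this[of "vector [1, 0]"] this[of "vector [0, 1]"] this[of "vector [1, 1]"]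
  have "X$2$1 = 0" "X$1$2 = 0" "X$2$2 = X$1$1" by (simp_all add: det_2)
  then have "X = mat (X$1$1)" by (simp add: mat2_eq_iff)
  then show False using assms by (auto simp: scalar_mat_def)
qed

lemma eigvec_of_commuting:
  fixes X Z :: "'a::field mat2"
  assumes "\<not> scalar_mat X" "X ** Z = Z ** X" "eigvec X x"
  shows "eigvec Z x"
proof -
  obtain \<mu> where \<mu>: "X *v x = \<mu> *s x" and "x \<noteq> 0" using assms(3) by (auto simp: eigvec_def)
  define K where "K = X - mat \<mu>"
  have "K \<noteq> 0"
  proof
    assume "K = 0"
    then have "X = mat \<mu>" by (simp add: K_def)
    then show False using assms(1) by (auto simp: scalar_mat_def)
  qed
  moreover have "K *v x = 0" using \<mu> by (simp add: K_def matrix_vector_mult_diff_rdistrib mat_mult_vec)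
  moreover have "commutator K Z = commutator X Z" by (simp add: K_def mat2_simps algebra_simps)
  then have "K ** Z = Z ** K" using assms(2) by simp
  then have "K *v (Z *v x) = Z *v (K *v x)" by (simp add: matrix_vector_mul_assoc)
  ultimately have "det (mat_of_cols x (Z *v x)) = 0" by (intro det_mat_of_cols_kernel) auto
  then show ?thesis using \<open>x \<noteq> 0\<close> eigvec_iff_det_cyclic by blast
qed

lemma common_eigvec_if_det_commutator_eq_0:
  fixes X Y :: "'a::field mat2"
  assumes "det (commutator X Y) = 0" "commutator X Y \<noteq> 0"
  shows "\<exists>x. eigvec X x \<and> eigvec Y x"
proof -
  define N where "N = commutator X Y"
  \<comment> \<open>By Cayley--Hamilton, \<open>N\<^sup>2 = 0\<close> and \<open>N X N = N Y N = 0\<close>: the image of \<open>N\<close> is a common eigenline.\<close>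
  have NN: "N ** N = 0" and NXN: "N ** X ** N = 0" and NYN: "N ** Y ** N = 0"
    using commutator_square[of X Y] commutator_sandwich_left[of X Y]
      commutator_sandwich_right[of X Y] assms(1) by (simp_all add: N_def)
  obtain e where "N *v e \<noteq> 0" using assms(2) matrix_eq[of N 0] by (auto simp: N_def)
  define x where "x = N *v e"
  have "N *v x = 0" "N *v (X *v x) = 0" "N *v (Y *v x) = 0"
    using NN NXN NYN by (simp_all add: x_def matrix_vector_mul_assoc matrix_mul_assoc)
  then have "det (mat_of_cols x (X *v x)) = 0" "det (mat_of_cols x (Y *v x)) = 0"
    using assms(2) det_mat_of_cols_kernel[of N] unfolding N_def by blast+
  then show ?thesis using \<open>N *v e \<noteq> 0\<close> eigvec_iff_det_cyclic x_def by blast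
qed

lemma mat_conj_mat_of_cols_col1:
  fixes X :: "'a::field mat2"
  assumes "invertible (mat_of_cols x y)" "X *v x = a *s x + b *s y"
  shows "mat_conj (mat_of_cols x y) X $ 1 $ 1 = a" "mat_conj (mat_of_cols x y) X $ 2 $ 1 = b"
proof -
  have "X *v (mat_of_cols x y *v vector [1, 0]) = mat_of_cols x y *v vector [a, b]"
    using assms(2) by (simp add: mat_of_cols_mult_vec)
  then have "mat_conj (mat_of_cols x y) X *v vector [1, 0] = vector [a, b]"
    by (rule mat_conj_mult_vec[OF assms(1)])
  then show "mat_conj (mat_of_cols x y) X $ 1 $ 1 = a" "mat_conj (mat_of_cols x y) X $ 2 $ 1 = b"
    by (simp_all add: vec2_eq_iff)
qed

lemma mat_conj_mat_of_cols_col2: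
  fixes X :: "'a::field mat2"
  assumes "invertible (mat_of_cols x y)" "X *v y = a *s x + b *s y"
  shows "mat_conj (mat_of_cols x y) X $ 1 $ 2 = a" "mat_conj (mat_of_cols x y) X $ 2 $ 2 = b"
proof -
  have "X *v (mat_of_cols x y *v vector [0, 1]) = mat_of_cols x y *v vector [a, b]"
    using assms(2) by (simp add: mat_of_cols_mult_vec)
  then have "mat_conj (mat_of_cols x y) X *v vector [0, 1] = vector [a, b]"
    by (rule mat_conj_mult_vec[OF assms(1)])
  then show "mat_conj (mat_of_cols x y) X $ 1 $ 2 = a" "mat_conj (mat_of_cols x y) X $ 2 $ 2 = b"
    by (simp_all add: vec2_eq_iff)
qed

lemma commutator_diagonal:
  fixes D W :: "'a::comm_ring_1 mat2"
  assumes "D$1$2 = 0" "D$2$1 = 0"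
  shows "commutator D W = mat2_of 0 ((D$1$1 - D$2$2) * W$1$2) ((D$2$2 - D$1$1) * W$2$1) 0"
  using assms by (simp add: mat2_eq_iff algebra_simps)

lemma det_commutator_sum_ne_0:
  fixes X Y Z :: "'a::field mat2"
  assumes g: "invertible (mat_of_cols p r)"
    and "X *v p = a *s p" "X *v r = b *s r" "Y *v p = c *s p" "Z *v r = e *s r"
    and "X ** Y \<noteq> Y ** X" "X ** Z \<noteq> Z ** X"
  shows "det (commutator X (Y + Z)) \<noteq> 0"
proof -
  \<comment> \<open>In the eigenbasis \<open>p, r\<close> of \<open>X\<close>, \<open>Y\<close> is upper and \<open>Z\<close> lower triangular.\<close>
  define D V W where "D = mat_conj (mat_of_cols p r) X" "V = mat_conj (mat_of_cols p r) Y"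
    "W = mat_conj (mat_of_cols p r) Z"
  have zeros: "D$1$2 = 0" "D$2$1 = 0" "V$2$1 = 0" "W$1$2 = 0"
    using mat_conj_mat_of_cols_col1[OF g, of X a 0] mat_conj_mat_of_cols_col2[OF g, of X 0 b]
      mat_conj_mat_of_cols_col1[OF g, of Y c 0] mat_conj_mat_of_cols_col2[OF g, of Z 0 e] assms(2-5)
    by (simp_all add: D_V_W_def)
  note comm = mat_conj_commutator[OF g]
  have "mat_conj (mat_of_cols p r) (commutator A B) \<noteq> 0" if "A ** B \<noteq> B ** A" for A B
    using that mat_conj_eq_0_iff[OF g] by simp
  then have "commutator D V \<noteq> 0" "commutator D W \<noteq> 0"
    using assms(6,7) by (simp_all add: D_V_W_def flip: comm)
  moreover have "commutator D V = mat2_of 0 ((D$1$1 - D$2$2) * V$1$2) 0 0"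
    "commutator D W = mat2_of 0 0 ((D$2$2 - D$1$1) * W$2$1) 0"
    using commutator_diagonal[OF zeros(1,2)] zeros(3,4) by simp_all
  ultimately have "(D$1$1 - D$2$2) * V$1$2 \<noteq> 0" "(D$2$2 - D$1$1) * W$2$1 \<noteq> 0"
    by (auto simp: mat2_eq_iff)
  moreover have "det (commutator D (V + W)) = - ((D$1$1 - D$2$2) * V$1$2) * ((D$2$2 - D$1$1) * W$2$1)"
    using commutator_diagonal[OF zeros(1,2), of "V + W"] zeros(3,4) by (simp add: det_2)
  moreover have "V + W = mat_conj (mat_of_cols p r) (Y + Z)" by (simp add: D_V_W_def mat_conj_add)
  then have "det (commutator D (V + W)) = det (commutator X (Y + Z))"
    using det_mat_conj[OF g, of "commutator X (Y + Z)"] by (simp only: D_V_W_def comm)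
  ultimately show ?thesis by simp
qed

lemma common_eigvec_of_three:
  fixes X Y Z :: "'a::field mat2"
  assumes "det (commutator X Y) = 0" "det (commutator X Z) = 0"
    and "det (commutator X (Y + Z)) = 0" and XY: "commutator X Y \<noteq> 0"
  shows "\<exists>x. eigvec X x \<and> eigvec Y x \<and> eigvec Z x"
proof -
  obtain p where p: "eigvec X p" "eigvec Y p"
    using common_eigvec_if_det_commutator_eq_0[OF assms(1) XY] by blast
  have X: "\<not> scalar_mat X" using XY by (auto simp: scalar_mat_def mat2_eq_iff)
  consider "X ** Z = Z ** X" | "X ** (Y + Z) = (Y + Z) ** X"
    | "X ** Z \<noteq> Z ** X" "X ** (Y + Z) \<noteq> (Y + Z) ** X" by blast
  then show ?thesis
  proof cases
    case 1
    then show ?thesis using eigvec_of_commuting[OF X] p by blast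
  next
    case 2
    then show ?thesis using eigvec_of_commuting[OF X 2 p(1)] eigvec_add_cancel p by blast
  next
    case 3
    obtain r where r: "eigvec X r" "eigvec Z r"
      using common_eigvec_if_det_commutator_eq_0[OF assms(2)] 3(1) by auto
    show ?thesis
    proof (cases "det (mat_of_cols r p) = 0")
      case True
      then obtain c where "p = c *s r"
        using r(1) dependent_if_det_mat_of_cols by (auto simp: eigvec_def)
      moreover have "c \<noteq> 0" using p(1) \<open>p = c *s r\<close> by (auto simp: eigvec_def)
      ultimately show ?thesis using p eigvec_smult[OF r(2)] by blast
    next
      case False
      then have "invertible (mat_of_cols p r)" by (simp add: invertible_det_nz det_2 algebra_simps)
      moreover obtain a b c e where "X *v p = a *s p" "X *v r = b *s r" "Y *v p = c *s p" "Z *v r = e *s r"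
        using p r by (auto simp: eigvec_def)
      ultimately have "det (commutator X (Y + Z)) \<noteq> 0"
        using det_commutator_sum_ne_0 XY 3(1) by (metis eq_iff_diff_eq_0)
      then show ?thesis using assms(3) by blast
    qed
  qed
qed

subsection \<open>Pairs with non-singular commutator\<close>

lemma trace_dual_companion:
  fixes Z M :: "'a::field mat2"
  assumes "trace Z = 0" "trace (Z ** companion t d) = 0" "trace (Z ** M) = 0"
    "trace (Z ** companion t d ** M) = 0" and QM: "det (commutator (companion t d) M) \<noteq> 0"
  shows "Z = 0"
proof -
  define z1 z3 where "z1 = Z$1$1" "z3 = Z$2$1"
  have "Z$2$2 = - z1" "Z$1$2 - d * z3 + t * Z$2$2 = 0"
    using assms(1,2) by (simp_all add: z1_z3_def trace_mat2 companion_def eq_neg_iff_add_eq_0 algebra_simps)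
  then have Z: "Z = mat2_of z1 (d * z3 + t * z1) z3 (- z1)"
    by (simp add: z1_z3_def mat2_eq_iff algebra_simps)
  define a b c e where "a = M$1$1 + t * M$2$1 - M$2$2" "b = d * M$2$1 + M$1$2"
    "c = t * M$1$1 + (t\<^sup>2 - d) * M$2$1 - M$1$2 - t * M$2$2" "e = d * (M$1$1 + t * M$2$1 - M$2$2)"
  \<comment> \<open>Cramer's rule for the two unknowns \<open>z1, z3\<close>; the determinant is that of the commutator.\<close>
  have "det (commutator (companion t d) M) * z1
      = b * trace (Z ** companion t d ** M) - e * trace (Z ** M)"
    "det (commutator (companion t d) M) * z3
      = c * trace (Z ** M) - a * trace (Z ** companion t d ** M)"
    by (subst (1 2) Z; simp add: a_b_c_e_def mat2_simps companion_def power2_eq_square algebra_simps)+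
  then have "z1 = 0" "z3 = 0" using assms(3,4) QM by auto
  then show ?thesis using Z by (simp add: mat2_eq_iff)
qed

lemma trace_mat_conj_mult:
  "invertible g \<Longrightarrow> trace (mat_conj g X ** mat_conj g Y) = trace (X ** Y)"
  "invertible g \<Longrightarrow> trace (mat_conj g X ** mat_conj g Y ** mat_conj g Z) = trace (X ** Y ** Z)"
  by (simp_all add: trace_mat_conj flip: mat_conj_mult)

lemma mat_conj_cyclic_basis:
  fixes P :: "'a::field mat2"
  assumes "det (mat_of_cols x (P *v x)) \<noteq> 0"
  shows "invertible (mat_of_cols x (P *v x))"
    "mat_conj (mat_of_cols x (P *v x)) P = companion (trace P) (det P)"
  using assms by (simp_all add: invertible_det_nz mat_conj_eqI mult_cyclic_basis)

lemma pencil_kernel_iff: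
  "(Y - mat a - mat b ** X) *v x = 0 \<longleftrightarrow> Y *v x = a *s x + b *s (X *v x)"
  for X Y :: "'a::comm_ring_1^'n^'n"
proof -
  have "(Y - mat a - mat b ** X) *v x = Y *v x - a *s x - b *s (X *v x)"
    by (simp only: matrix_vector_mult_diff_rdistrib mat_mult_vec matrix_vector_mul_assoc[symmetric])
  then show ?thesis by (simp add: diff_diff_eq)
qed

lemma mult_vec_first_col_mat_conj:
  fixes X :: "'a::field mat2"
  assumes "invertible (mat_of_cols x y)"
  shows "X *v x = mat_conj (mat_of_cols x y) X $ 1 $ 1 *s x + mat_conj (mat_of_cols x y) X $ 2 $ 1 *s y"
  using mult_mat_conj[OF assms, of X] by (simp add: mat2_eq_iff vec2_eq_iff algebra_simps)

lemma cyclic_if_pencil_kernel: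
  fixes P R :: "'a::field mat2"
  assumes "det (commutator P R) \<noteq> 0" "x \<noteq> 0" "R *v x = a *s x + b *s (P *v x)"
  shows "det (mat_of_cols x (P *v x)) \<noteq> 0"
proof
  assume "det (mat_of_cols x (P *v x)) = 0"
  then have "eigvec P x" using assms(2) eigvec_iff_det_cyclic by blast
  moreover from this have "eigvec R x"
    using assms(3) by (auto simp: eigvec_def mult_vec_smult vector_smult_assoc simp flip: vector_sadd_rdistrib)
  ultimately show False using det_commutator_eq_0_if_common_eigvec assms(1) by blast
qed

lemma simultaneous_conj_of_pair:
  fixes P R P' R' :: "'a::field mat2"
  assumes c: "det (commutator P R) \<noteq> 0"
    and h: "trace P' = trace P" "det P' = det P" "trace R' = trace R" "det R' = det R"
      "trace (P' ** R') = trace (P ** R)"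
  shows "\<exists>g g'. invertible g \<and> invertible g' \<and> mat_conj g P = companion (trace P) (det P)
    \<and> mat_conj g' P' = companion (trace P) (det P) \<and> mat_conj g R = mat_conj g' R'"
proof -
  have "\<not> scalar_mat P" using c by (auto simp: scalar_mat_def mat2_simps)
  then obtain x where x: "det (mat_of_cols x (P *v x)) \<noteq> 0" using cyclic_vector_exists by blast
  define g M where "g = mat_of_cols x (P *v x)" and "M = mat_conj g R"
  note g = mat_conj_cyclic_basis[OF x, folded g_def]
  \<comment> \<open>The first column \<open>(\<alpha>, \<beta>)\<close> of \<open>M\<close> gives \<open>R x = \<alpha> x + \<beta> P x\<close>, so the pencil
    \<open>R - \<alpha> - \<beta> P\<close> is singular; its determinant is an invariant, so the same holds for \<open>P', R'\<close>.\<close>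
  define \<alpha> \<beta> where "\<alpha> = M$1$1" and "\<beta> = M$2$1"
  have "x \<noteq> 0" using x by (auto simp: det_2)
  moreover have "R *v x = \<alpha> *s x + \<beta> *s (P *v x)"
    using mult_vec_first_col_mat_conj[OF g(1)[unfolded g_def], of R, folded g_def]
    by (simp only: \<alpha>_def \<beta>_def M_def)
  ultimately have "det (R - mat \<alpha> - mat \<beta> ** P) = 0"
    unfolding det_eq_0_iff_kernel pencil_kernel_iff by blast
  then have "det (R' - mat \<alpha> - mat \<beta> ** P') = 0" using h by (simp add: det_sub_pencil)
  then obtain x' where "x' \<noteq> 0" and R'x': "R' *v x' = \<alpha> *s x' + \<beta> *s (P' *v x')"
    unfolding det_eq_0_iff_kernel pencil_kernel_iff by blast
  moreover have "det (commutator P' R') \<noteq> 0" using c h by (simp add: det_commutator)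
  ultimately have x': "det (mat_of_cols x' (P' *v x')) \<noteq> 0" using cyclic_if_pencil_kernel by blast
  define g' M' where "g' = mat_of_cols x' (P' *v x')" and "M' = mat_conj g' R'"
  note g' = mat_conj_cyclic_basis[OF x', folded g'_def]
  have "M'$1$1 = \<alpha>" "M'$2$1 = \<beta>"
    using mat_conj_mat_of_cols_col1[OF g'(1)[unfolded g'_def] R'x'] by (simp_all add: M'_def g'_def)
  moreover have "trace M' = trace M" using h trace_mat_conj[OF g(1)] trace_mat_conj[OF g'(1)]
    by (simp add: M_def M'_def)
  moreover have "trace (companion (trace P) (det P) ** M') = trace (companion (trace P) (det P) ** M)"
    using trace_mat_conj_mult(1)[OF g(1), of P R] trace_mat_conj_mult(1)[OF g'(1), of P' R'] g(2) g'(2) h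
    by (simp add: M_def M'_def)
  ultimately have "M' = M" by (simp add: \<alpha>_def \<beta>_def companion_def mat2_simps algebra_simps)
  then show ?thesis using g g' h(1,2) by (intro exI[of _ g] exI[of _ g']) (auto simp: M_def M'_def)
qed

lemma simultaneous_conj_of_triple:
  fixes P R Y P' R' Y' :: "'a::field mat2"
  assumes c: "det (commutator P R) \<noteq> 0"
    and h1: "trace P' = trace P" "det P' = det P" "trace R' = trace R" "det R' = det R"
      "trace (P' ** R') = trace (P ** R)"
    and h2: "trace Y' = trace Y" "trace (Y' ** P') = trace (Y ** P)" "trace (Y' ** R') = trace (Y ** R)"
      "trace (Y' ** P' ** R') = trace (Y ** P ** R)"
  shows "\<exists>g g'. invertible g \<and> invertible g' \<and> mat_conj g P = mat_conj g' P'
    \<and> mat_conj g R = mat_conj g' R' \<and> mat_conj g Y = mat_conj g' Y'"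
proof -
  obtain g g' where g: "invertible g" "invertible g'" and
    P: "mat_conj g P = companion (trace P) (det P)" "mat_conj g' P' = companion (trace P) (det P)"
    and R: "mat_conj g R = mat_conj g' R'"
    using simultaneous_conj_of_pair[OF c h1] by blast
  define Q M where "Q = companion (trace P) (det P)" and "M = mat_conj g R"
  have QM: "mat_conj g P = Q" "mat_conj g' P' = Q" "mat_conj g R = M" "mat_conj g' R' = M"
    using P R by (simp_all add: Q_def M_def)
  have "trace (mat_conj g Y) = trace (mat_conj g' Y')"
    using h2(1) by (simp add: trace_mat_conj g)
  moreover have "trace (mat_conj g Y ** Q) = trace (mat_conj g' Y' ** Q)"
    using h2(2) trace_mat_conj_mult(1)[OF g(1), of Y P] trace_mat_conj_mult(1)[OF g(2), of Y' P']
    by (simp add: QM)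
  moreover have "trace (mat_conj g Y ** M) = trace (mat_conj g' Y' ** M)"
    using h2(3) trace_mat_conj_mult(1)[OF g(1), of Y R] trace_mat_conj_mult(1)[OF g(2), of Y' R']
    by (simp add: QM)
  moreover have "trace (mat_conj g Y ** Q ** M) = trace (mat_conj g' Y' ** Q ** M)"
    using h2(4) trace_mat_conj_mult(2)[OF g(1), of Y P R] trace_mat_conj_mult(2)[OF g(2), of Y' P' R']
    by (simp add: QM)
  moreover have "det (commutator Q M) \<noteq> 0"
    using c det_mat_conj[OF g(1), of "commutator P R"] mat_conj_commutator[OF g(1), of P R]
    by (simp add: QM)
  ultimately have "mat_conj g Y - mat_conj g' Y' = 0" unfolding Q_def
    by (intro trace_dual_companion) (simp_all add: matrix_diff_rdistrib trace_sub)
  then show ?thesis using g QM by (intro exI[of _ g] exI[of _ g']) auto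
qed

definition trace_data :: "'a::comm_ring_1 mat2 \<Rightarrow> 'a mat2 \<Rightarrow> 'a mat2 \<Rightarrow> 'a list" where
  "trace_data A B C = [trace A, trace B, trace C, det A, det B, det C,
     trace (A ** B), trace (A ** C), trace (B ** C), trace (A ** B ** C)]"

definition sim_conj3 :: "'a::field mat2 \<Rightarrow> 'a mat2 \<Rightarrow> 'a mat2 \<Rightarrow> 'a mat2 \<Rightarrow> 'a mat2 \<Rightarrow> 'a mat2 \<Rightarrow> bool"
  where "sim_conj3 A B C A' B' C' \<longleftrightarrow> (\<exists>g g'. invertible g \<and> invertible g'
    \<and> mat_conj g A = mat_conj g' A' \<and> mat_conj g B = mat_conj g' B' \<and> mat_conj g C = mat_conj g' C')"

lemma trace_data_swap12:
  "trace_data A B C = trace_data A' B' C' \<Longrightarrow> trace_data B A C = trace_data B' A' C'"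
  by (simp add: trace_data_def trace_mul_sym[of B A] trace_mul_sym[of B' A']
      trace_mult3_cycle[of B A C] trace_mult3_cycle[of B' A' C'] trace_mult3_swap[of A C B]
      trace_mult3_swap[of A' C' B'])

lemma trace_data_swap23:
  "trace_data A B C = trace_data A' B' C' \<Longrightarrow> trace_data A C B = trace_data A' C' B'"
  by (simp add: trace_data_def trace_mul_sym[of C B] trace_mul_sym[of C' B']
      trace_mult3_swap[of A C B] trace_mult3_swap[of A' C' B'])

lemma trace_data_add:
  "trace_data A B C = trace_data A' B' C' \<Longrightarrow> trace_data A (B + C) C = trace_data A' (B' + C') C'"
  by (simp add: trace_data_def trace_add det_add_mat2 matrix_add_ldistrib matrix_add_rdistrib
      trace_square trace_mult_square)

lemma sim_conj3_swap12: "sim_conj3 A B C A' B' C' \<Longrightarrow> sim_conj3 B A C B' A' C'"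
  and sim_conj3_swap23: "sim_conj3 A B C A' B' C' \<Longrightarrow> sim_conj3 A C B A' C' B'"
  by (auto simp: sim_conj3_def)

lemma sim_conj3_if_det_commutator_ne_0:
  assumes "trace_data A B C = trace_data A' B' C'" "det (commutator A B) \<noteq> 0"
  shows "sim_conj3 A B C A' B' C'"
  using simultaneous_conj_of_triple[OF assms(2), of A' B' C' C] assms(1)
  by (simp add: sim_conj3_def trace_data_def trace_mul_sym[of C A] trace_mul_sym[of C B]
      trace_mul_sym[of C' A'] trace_mul_sym[of C' B'] trace_mult3_cycle[of C A B]
      trace_mult3_cycle[of C' A' B'])

lemma sim_conj3_if_det_commutator_sum_ne_0:
  assumes "trace_data A B C = trace_data A' B' C'" "det (commutator A (B + C)) \<noteq> 0"
  shows "sim_conj3 A B C A' B' C'"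
proof -
  have "sim_conj3 A (B + C) C A' (B' + C') C'"
    using trace_data_add[OF assms(1)] assms(2) by (rule sim_conj3_if_det_commutator_ne_0)
  then show ?thesis unfolding sim_conj3_def by (metis add_right_cancel mat_conj_add)
qed

definition singular_commutators :: "'a::comm_ring_1 mat2 \<Rightarrow> 'a mat2 \<Rightarrow> 'a mat2 \<Rightarrow> bool" where
  "singular_commutators A B C \<longleftrightarrow> det (commutator A B) = 0 \<and> det (commutator A C) = 0
    \<and> det (commutator B C) = 0 \<and> det (commutator A (B + C)) = 0
    \<and> det (commutator B (A + C)) = 0"

lemma sim_conj3_if_not_singular_commutators:
  assumes "trace_data A B C = trace_data A' B' C'" "\<not> singular_commutators A B C"
  shows "sim_conj3 A B C A' B' C'"
proof -
  consider "det (commutator A B) \<noteq> 0" | "det (commutator A C) \<noteq> 0" | "det (commutator B C) \<noteq> 0"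
    | "det (commutator A (B + C)) \<noteq> 0" | "det (commutator B (A + C)) \<noteq> 0"
    using assms(2) unfolding singular_commutators_def by blast
  then show ?thesis
  proof cases
    case 1
    then show ?thesis using assms(1) sim_conj3_if_det_commutator_ne_0 by blast
  next
    case 2
    then show ?thesis using sim_conj3_if_det_commutator_ne_0 trace_data_swap23[OF assms(1)]
        sim_conj3_swap23 by blast
  next
    case 3
    then have "sim_conj3 B C A B' C' A'"
      using trace_data_swap23[OF trace_data_swap12[OF assms(1)]] sim_conj3_if_det_commutator_ne_0
      by blast
    then show ?thesis using sim_conj3_swap12 sim_conj3_swap23 by blast
  next
    case 4
    then show ?thesis using assms(1) sim_conj3_if_det_commutator_sum_ne_0 by blast
  next
    case 5
    then show ?thesis using sim_conj3_if_det_commutator_sum_ne_0 trace_data_swap12[OF assms(1)]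
        sim_conj3_swap12 by blast
  qed
qed

lemma singular_commutators_trace_data:
  assumes "trace_data A B C = trace_data A' B' C'"
  shows "singular_commutators A' B' C' \<longleftrightarrow> singular_commutators A B C"
proof -
  have "det (commutator X' Y') = det (commutator X Y)"
    if "trace_data X Y Z = trace_data X' Y' Z'" for X Y Z X' Y' Z' :: "'a mat2"
    using that by (simp add: trace_data_def det_commutator)
  from this[OF assms] this[OF trace_data_swap23[OF assms]]
    this[OF trace_data_swap23[OF trace_data_swap12[OF assms]]]
    this[OF trace_data_add[OF assms]] this[OF trace_data_add[OF trace_data_swap12[OF assms]]]
  show ?thesis by (simp add: singular_commutators_def add.commute)
qed

definition common_eigvec :: "'a::field mat2 \<Rightarrow> 'a mat2 \<Rightarrow> 'a mat2 \<Rightarrow> bool" where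
  "common_eigvec A B C \<longleftrightarrow> (\<exists>x. eigvec A x \<and> eigvec B x \<and> eigvec C x)"

lemma commuting_if_no_common_eigvec:
  fixes A B C :: "'a::field mat2"
  assumes "singular_commutators A B C" "\<not> common_eigvec A B C"
  shows "A ** B = B ** A" "A ** C = C ** A" "B ** C = C ** B"
proof -
  have "X ** Y = Y ** X" if "det (commutator X Y) = 0" "det (commutator X Z) = 0"
    "det (commutator X (Y + Z)) = 0" "\<not> (\<exists>x. eigvec X x \<and> eigvec Y x \<and> eigvec Z x)"
    for X Y Z :: "'a mat2"
    using common_eigvec_of_three[OF that(1-3)] that(4) by auto
  from this[of A B C] this[of A C B] this[of B C A] assms
  show "A ** B = B ** A" "A ** C = C ** A" "B ** C = C ** B"
    by (auto simp: singular_commutators_def common_eigvec_def det_commutator_swap add.commute)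
qed

lemma no_eigvec_member_if_no_common_eigvec:
  fixes A B C :: "'a::field mat2"
  assumes "singular_commutators A B C" "\<not> common_eigvec A B C"
  shows "\<not> (\<exists>x. eigvec A x) \<or> \<not> (\<exists>x. eigvec B x) \<or> \<not> (\<exists>x. eigvec C x)"
proof -
  note comm = commuting_if_no_common_eigvec[OF assms]
  have "\<not> (\<exists>x. eigvec X x)" if X: "\<not> scalar_mat X" "X = A \<or> X = B \<or> X = C" for X
  proof
    assume "\<exists>x. eigvec X x"
    then obtain x where x: "eigvec X x" by blast
    have "X ** Y = Y ** X" if "Y = A \<or> Y = B \<or> Y = C" for Y
      using comm X(2) that by auto
    then have "eigvec A x" "eigvec B x" "eigvec C x" using eigvec_of_commuting[OF X(1) _ x] by blast+
    then show False using assms(2) common_eigvec_def by blast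
  qed
  moreover have "\<not> (scalar_mat A \<and> scalar_mat B \<and> scalar_mat C)"
  proof
    assume "scalar_mat A \<and> scalar_mat B \<and> scalar_mat C"
    then have "eigvec A (vector [1, 0])" "eigvec B (vector [1, 0])" "eigvec C (vector [1, 0])"
      by (auto simp: scalar_mat_def eigvec_def mat_mult_vec vec2_eq_iff)
    then show False using assms(2) common_eigvec_def by blast
  qed
  ultimately show ?thesis by blast
qed

lemma commutant_mat2:
  fixes Q Z :: "'a::field mat2"
  assumes Q: "Q$2$1 \<noteq> 0" and comm: "Q ** Z = Z ** Q"
  shows "\<exists>a b. Z = mat a + mat b ** Q"
proof -
  define b where "b = Z$2$1 / Q$2$1"
  have "(Q ** Z)$1$1 = (Z ** Q)$1$1" "(Q ** Z)$2$1 = (Z ** Q)$2$1" using comm by simp_all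
  then have e: "Z$1$2 * Q$2$1 = Q$1$2 * Z$2$1" "Z$2$2 * Q$2$1 = Q$2$1 * Z$1$1 + Q$2$2 * Z$2$1 - Z$2$1 * Q$1$1"
    by (simp_all add: algebra_simps)
  have "Z$2$1 = b * Q$2$1" using Q by (simp add: b_def)
  moreover have "Z$1$2 = b * Q$1$2"
    using e(1) Q by (simp add: b_def divide_simps mult.commute)
  moreover have "Z$2$2 = (Z$1$1 - b * Q$1$1) + b * Q$2$2"
    using e(2) Q by (simp add: b_def divide_simps algebra_simps)
  ultimately have "Z = mat (Z$1$1 - b * Q$1$1) + mat b ** Q" by (simp add: mat2_eq_iff)
  then show ?thesis by blast
qed

lemma eq_0_if_singular_commuting:
  fixes Q N :: "'a::field mat2"
  assumes "\<not> (\<exists>x. eigvec Q x)" "Q ** N = N ** Q" "det N = 0"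
  shows "N = 0"
proof (rule ccontr)
  assume "N \<noteq> 0"
  obtain x where "x \<noteq> 0" "N *v x = 0" using assms(3) det_eq_0_iff_kernel by blast
  moreover from this have "N *v (Q *v x) = 0"
    using assms(2) by (metis matrix_vector_mul_assoc matrix_vector_mult_0_right)
  ultimately have "eigvec Q x" using \<open>N \<noteq> 0\<close> det_mat_of_cols_kernel eigvec_iff_det_cyclic by blast
  then show False using assms(1) by blast
qed

text \<open>The commutant of \<open>Q\<close> is the field \<open>F[Q]\<close>, on which \<open>det\<close> is an anisotropic norm form;
  \<open>Z' - Z\<close> is trace-orthogonal to \<open>F[Q] \<ni> Z\<close>, so \<open>det Z' = det Z + det (Z' - Z)\<close>.\<close>

lemma eq_if_commuting_no_eigvec:
  fixes Q Z Z' :: "'a::field mat2"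
  assumes Q: "\<not> (\<exists>x. eigvec Q x)" and comm: "Q ** Z = Z ** Q" "Q ** Z' = Z' ** Q"
    and h: "trace Z' = trace Z" "trace (Q ** Z') = trace (Q ** Z)" "det Z' = det Z"
  shows "Z' = Z"
proof -
  define N where "N = Z' - Z"
  have "Q$2$1 \<noteq> 0"
  proof
    assume "Q$2$1 = 0"
    then have "eigvec Q (vector [1, 0])" by (auto simp: eigvec_def vec2_eq_iff)
    then show False using Q by blast
  qed
  then obtain a b where Z: "Z = mat a + mat b ** Q" using commutant_mat2 comm(1) by blast
  have "trace N = 0" "trace (Q ** N) = 0" using h by (simp_all add: N_def trace_sub matrix_diff_ldistrib)
  moreover have "trace (Z ** N) = a * trace N + b * trace (Q ** N)" by (simp add: Z mat2_simps algebra_simps)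
  ultimately have "det Z' = det Z + det N" using det_add_mat2[of Z N] by (simp add: N_def)
  then have "det N = 0" using h(3) by simp
  moreover have "Q ** N = N ** Q" using comm by (simp add: N_def matrix_diff_ldistrib matrix_diff_rdistrib)
  ultimately have "N = 0" by (rule eq_0_if_singular_commuting[OF Q, rotated])
  then show ?thesis by (simp add: N_def)
qed

lemma sim_conj3_if_commuting_no_eigvec:
  fixes A B C A' B' C' :: "'a::field mat2"
  assumes td: "trace_data A B C = trace_data A' B' C'" and A: "\<not> (\<exists>x. eigvec A x)"
    and comm: "A ** B = B ** A" "A ** C = C ** A" "A' ** B' = B' ** A'" "A' ** C' = C' ** A'"
  shows "sim_conj3 A B C A' B' C'"
proof -
  have A': "\<not> (\<exists>x. eigvec A' x)" using A td by (simp add: has_eigvec_iff_root trace_data_def)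
  define e where "e = (vector [1, 0] :: 'a^2)"
  have "e \<noteq> 0" by (simp add: e_def vec2_eq_iff)
  then have "det (mat_of_cols e (A *v e)) \<noteq> 0" "det (mat_of_cols e (A' *v e)) \<noteq> 0"
    using A A' eigvec_iff_det_cyclic by blast+
  moreover have "trace A' = trace A" "det A' = det A" using td by (simp_all add: trace_data_def)
  ultimately obtain g g' where g: "invertible g" "invertible g'"
    and QA: "mat_conj g A = companion (trace A) (det A)" "mat_conj g' A' = companion (trace A) (det A)"
    using mat_conj_cyclic_basis by metis
  define Q where "Q = companion (trace A) (det A)"
  have Q: "\<not> (\<exists>x. eigvec Q x)"
    using A trace_mat_conj[OF g(1), of A] det_mat_conj[OF g(1), of A] QA(1)
    by (simp add: has_eigvec_iff_root Q_def)
  have "mat_conj g' Y' = mat_conj g Y"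
    if "A ** Y = Y ** A" "A' ** Y' = Y' ** A'" "trace Y' = trace Y" "det Y' = det Y"
      "trace (A' ** Y') = trace (A ** Y)" for Y Y'
  proof (rule eq_if_commuting_no_eigvec[OF Q])
    show "Q ** mat_conj g Y = mat_conj g Y ** Q"
      using that(1) QA(1) mat_conj_mult[OF g(1), of A Y] mat_conj_mult[OF g(1), of Y A] by (simp add: Q_def)
    show "Q ** mat_conj g' Y' = mat_conj g' Y' ** Q"
      using that(2) QA(2) mat_conj_mult[OF g(2), of A' Y'] mat_conj_mult[OF g(2), of Y' A']
      by (simp add: Q_def)
    show "trace (mat_conj g' Y') = trace (mat_conj g Y)" "det (mat_conj g' Y') = det (mat_conj g Y)"
      using that(3,4) by (simp_all add: trace_mat_conj det_mat_conj g)
    show "trace (Q ** mat_conj g' Y') = trace (Q ** mat_conj g Y)"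
      using that(5) QA trace_mat_conj_mult(1)[OF g(1), of A Y] trace_mat_conj_mult(1)[OF g(2), of A' Y']
      by (simp add: Q_def)
  qed
  then show ?thesis unfolding sim_conj3_def using g QA td comm
    by (intro exI[of _ g] exI[of _ g']) (simp add: trace_data_def)
qed

lemma sim_conj3_if_no_common_eigvec:
  fixes A B C A' B' C' :: "'a::field mat2"
  assumes td: "trace_data A B C = trace_data A' B' C'" and s: "singular_commutators A B C"
    and "\<not> common_eigvec A B C" "\<not> common_eigvec A' B' C'"
  shows "sim_conj3 A B C A' B' C'"
proof -
  have "singular_commutators A' B' C'" using s singular_commutators_trace_data[OF td] by simp
  note c = commuting_if_no_common_eigvec[OF s assms(3)]
    and c' = commuting_if_no_common_eigvec[OF this assms(4)]
  consider "\<not> (\<exists>x. eigvec A x)" | "\<not> (\<exists>x. eigvec B x)" | "\<not> (\<exists>x. eigvec C x)"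
    using no_eigvec_member_if_no_common_eigvec[OF s assms(3)] by blast
  then show ?thesis
  proof cases
    case 1
    then show ?thesis using sim_conj3_if_commuting_no_eigvec[OF td] c c' by blast
  next
    case 2
    have "sim_conj3 B A C B' A' C'"
      using sim_conj3_if_commuting_no_eigvec[OF trace_data_swap12[OF td] 2 c(1)[symmetric] c(3)
          c'(1)[symmetric] c'(3)] .
    then show ?thesis by (rule sim_conj3_swap12)
  next
    case 3
    have "sim_conj3 C A B C' A' B'"
      using sim_conj3_if_commuting_no_eigvec[OF trace_data_swap12[OF trace_data_swap23[OF td]] 3
          c(2)[symmetric] c(3)[symmetric] c'(2)[symmetric] c'(3)[symmetric]] .
    then show ?thesis using sim_conj3_swap12 sim_conj3_swap23 by blast
  qed
qed

lemma common_eigvec_trace_data: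
  fixes A B C A' B' C' :: "'a::field mat2"
  assumes td: "trace_data A B C = trace_data A' B' C'" and s: "singular_commutators A B C"
    and "common_eigvec A B C"
  shows "common_eigvec A' B' C'"
proof (rule ccontr)
  assume "\<not> common_eigvec A' B' C'"
  then have "\<not> (\<exists>x. eigvec A' x) \<or> \<not> (\<exists>x. eigvec B' x) \<or> \<not> (\<exists>x. eigvec C' x)"
    using no_eigvec_member_if_no_common_eigvec s singular_commutators_trace_data[OF td] by blast
  moreover have "\<exists>x. eigvec A x" "\<exists>x. eigvec B x" "\<exists>x. eigvec C x"
    using assms(3) by (auto simp: common_eigvec_def)
  ultimately show False using td by (auto simp: has_eigvec_iff_root trace_data_def)
qed

lemma less_3_cases: "k < 3 \<Longrightarrow> k = 0 \<or> k = 1 \<or> k = (2::nat)"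
  by auto

definition diag2 :: "'a::zero \<Rightarrow> 'a \<Rightarrow> 'a mat2" where
  "diag2 a d = mat2_of a 0 0 d"

lemma invertible_mat_1: "invertible (mat 1 :: 'a::field^'n^'n)"
  unfolding invertible_def by (intro exI[of _ "mat 1"]) simp

lemma mat_conj_mat_1: "mat_conj (mat 1) X = X"
  by (simp add: mat_conj_eqI invertible_mat_1)

lemma sim_conj3_refl: "sim_conj3 A B C A B C"
  unfolding sim_conj3_def using invertible_mat_1 by blast

lemma sum_prod_eq_cases:
  fixes a d a' d' :: "'a::idom"
  assumes "a' + d' = a + d" "a' * d' = a * d"
  shows "(a' = a \<and> d' = d) \<or> (a' = d \<and> d' = a)"
proof -
  have d': "d' = a + d - a'" using assms(1) by (simp add: algebra_simps)
  have "(a' - a) * (a' - d) = 0" using assms(2) unfolding d' by (simp add: algebra_simps)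
  then show ?thesis using d' by auto
qed

lemma diagonals_same_or_swapped:
  fixes a d a' d' :: "'i \<Rightarrow> 'a::idom"
  assumes "\<And>k. k \<in> I \<Longrightarrow> a' k + d' k = a k + d k \<and> a' k * d' k = a k * d k"
    and "\<And>i j. i \<in> I \<Longrightarrow> j \<in> I \<Longrightarrow> i \<noteq> j \<Longrightarrow> a' i * a' j + d' i * d' j = a i * a j + d i * d j"
  shows "(\<forall>k\<in>I. a' k = a k \<and> d' k = d k) \<or> (\<forall>k\<in>I. a' k = d k \<and> d' k = a k)"
proof (rule ccontr)
  have same_or_swapped: "(a' k = a k \<and> d' k = d k) \<or> (a' k = d k \<and> d' k = a k)" if "k \<in> I" for k
    using sum_prod_eq_cases assms(1)[OF that] by blast
  assume "\<not> ?thesis"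
  then obtain i j where i: "i \<in> I" "\<not> (a' i = a i \<and> d' i = d i)"
    and j: "j \<in> I" "\<not> (a' j = d j \<and> d' j = a j)" by blast
  have si: "a' i = d i" "d' i = a i" "a i \<noteq> d i" using same_or_swapped[OF i(1)] i(2) by auto
  moreover have sj: "a' j = a j" "d' j = d j" "a j \<noteq> d j" using same_or_swapped[OF j(1)] j(2) by auto
  moreover have "i \<noteq> j" using si sj by auto
  ultimately have "d i * a j + a i * d j = a i * a j + d i * d j" using assms(2)[OF i(1) j(1)] by simp
  then have "(a i - d i) * (a j - d j) = 0" by (simp add: algebra_simps)
  then show False using si sj by simp
qed

lemma sim_conj3_diag2:
  fixes a d a' d' :: "nat \<Rightarrow> 'a::field"
  assumes td: "trace_data (diag2 (a 0) (d 0)) (diag2 (a 1) (d 1)) (diag2 (a 2) (d 2))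
    = trace_data (diag2 (a' 0) (d' 0)) (diag2 (a' 1) (d' 1)) (diag2 (a' 2) (d' 2))"
  shows "sim_conj3 (diag2 (a 0) (d 0)) (diag2 (a 1) (d 1)) (diag2 (a 2) (d 2))
    (diag2 (a' 0) (d' 0)) (diag2 (a' 1) (d' 1)) (diag2 (a' 2) (d' 2))"
proof -
  have "a' k + d' k = a k + d k \<and> a' k * d' k = a k * d k" if "k \<in> {0, 1, 2}" for k
    using td that by (auto simp: trace_data_def diag2_def mat2_simps)
  moreover have "a' i * a' j + d' i * d' j = a i * a j + d i * d j"
    if "i \<in> {0, 1, 2}" "j \<in> {0, 1, 2}" "i \<noteq> j" for i j
    using td that by (auto simp: trace_data_def diag2_def mat2_simps mult.commute)
  ultimately have "(\<forall>k\<in>{0, 1, 2}. a' k = a k \<and> d' k = d k) \<or> (\<forall>k\<in>{0, 1, 2}. a' k = d k \<and> d' k = a k)"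
    by (rule diagonals_same_or_swapped)
  then show ?thesis
  proof
    assume "\<forall>k\<in>{0, 1, 2}. a' k = a k \<and> d' k = d k"
    then show ?thesis using sim_conj3_refl by simp
  next
    assume sw: "\<forall>k\<in>{0, 1, 2}. a' k = d k \<and> d' k = a k"
    define S where "S = (mat2_of 0 1 1 0 :: 'a mat2)"
    have S: "invertible S" by (simp add: S_def invertible_det_nz det_2)
    have "mat_conj S (diag2 x y) = diag2 y x" for x y
      by (rule mat_conj_eqI[OF S]) (simp add: S_def diag2_def mat2_eq_iff)
    then show ?thesis unfolding sim_conj3_def using S invertible_mat_1 sw
      by (intro exI[of _ S] exI[of _ "mat 1"]) (simp add: mat_conj_mat_1)
  qed
qed

lemma polyfun_cong: "f \<in> polyfun d \<Longrightarrow> (\<And>k. k < d \<Longrightarrow> u k = u' k) \<Longrightarrow> f u = f u'"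
  by (induction f rule: polyfun.induct) auto

lemma polyfun_mono: "f \<in> polyfun d \<Longrightarrow> d \<le> e \<Longrightarrow> f \<in> polyfun e"
  by (induction f rule: polyfun.induct) (auto intro: polyfun.intros)

lemma polyfun_diff: "f \<in> polyfun d \<Longrightarrow> g \<in> polyfun d \<Longrightarrow> (\<lambda>u. f u - g u) \<in> polyfun d"
  using polyfun.pf_add[of f d "\<lambda>u. (- 1) * g u"] polyfun.pf_mult[OF polyfun.pf_const, of g d "- 1"]
  by simp

lemma inv_alg_mono:
  assumes f: "f \<in> inv_alg d" and "d \<le> e"
  shows "f \<in> inv_alg e"
proof -
  have pf: "f \<in> polyfun d" using f by (simp add: inv_alg_def)
  have "f (\<lambda>k. matrix_inv g ** u k ** g) = f u" if "invertible g" for u and g :: "'a mat2"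
  proof -
    define u' where "u' = (\<lambda>k. if k < d then u k else 0)"
    have "f (\<lambda>k. matrix_inv g ** u k ** g) = f (\<lambda>k. matrix_inv g ** u' k ** g)"
      by (rule polyfun_cong[OF pf]) (simp add: u'_def)
    also have "\<dots> = f u'" using f that by (simp add: inv_alg_def H_def u'_def)
    also have "\<dots> = f u" by (rule polyfun_cong[OF pf]) (simp add: u'_def)
    finally show ?thesis .
  qed
  then show ?thesis using polyfun_mono[OF pf assms(2)] by (simp add: inv_alg_def)
qed

definition matrix_polyfun :: "nat \<Rightarrow> ((nat \<Rightarrow> 'a::field mat2) \<Rightarrow> 'a mat2) \<Rightarrow> bool" where
  "matrix_polyfun d X \<longleftrightarrow> (\<forall>i j. (\<lambda>u. X u $ i $ j) \<in> polyfun d)"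

definition equivariant :: "((nat \<Rightarrow> 'a::field mat2) \<Rightarrow> 'a mat2) \<Rightarrow> bool" where
  "equivariant X \<longleftrightarrow> (\<forall>g u. invertible g \<longrightarrow> X (\<lambda>k. mat_conj g (u k)) = mat_conj g (X u))"

lemma matrix_polyfun_var: "k < d \<Longrightarrow> matrix_polyfun d (\<lambda>u. u k)"
  by (simp add: matrix_polyfun_def polyfun.pf_var)

lemma matrix_polyfun_mult: "matrix_polyfun d X \<Longrightarrow> matrix_polyfun d Y \<Longrightarrow> matrix_polyfun d (\<lambda>u. X u ** Y u)"
  unfolding matrix_polyfun_def by (auto intro!: polyfun.intros)

lemma equivariant_var: "equivariant (\<lambda>u. u k)"
  by (simp add: equivariant_def)

lemma equivariant_mult: "equivariant X \<Longrightarrow> equivariant Y \<Longrightarrow> equivariant (\<lambda>u. X u ** Y u)"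
  by (simp add: equivariant_def mat_conj_mult)

lemma trace_in_inv_alg:
  assumes "matrix_polyfun d X" "equivariant X"
  shows "(\<lambda>u. trace (X u)) \<in> inv_alg d"
proof -
  have "(\<lambda>u. trace (X u)) \<in> polyfun d"
    using assms(1) unfolding matrix_polyfun_def trace_mat2 by (auto intro!: polyfun.intros)
  moreover have "trace (X (\<lambda>k. matrix_inv g ** u k ** g)) = trace (X u)" if "invertible g" for g u
    using assms(2) that trace_mat_conj[OF that] by (simp add: equivariant_def flip: mat_conj_def)
  ultimately show ?thesis by (simp add: inv_alg_def)
qed

lemma det_in_inv_alg:
  assumes "matrix_polyfun d X" "equivariant X"
  shows "(\<lambda>u. det (X u)) \<in> inv_alg d"
proof -
  have "(\<lambda>u. det (X u)) \<in> polyfun d"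
    using assms(1) unfolding matrix_polyfun_def det_2 by (auto intro!: polyfun.intros polyfun_diff)
  moreover have "det (X (\<lambda>k. matrix_inv g ** u k ** g)) = det (X u)" if "invertible g" for g u
    using assms(2) that det_mat_conj[OF that] by (simp add: equivariant_def flip: mat_conj_def)
  ultimately show ?thesis by (simp add: inv_alg_def)
qed

lemma Sset_subset_inv_alg: "Sset d \<subseteq> inv_alg d"
  unfolding Sset_def
  by (auto intro!: trace_in_inv_alg det_in_inv_alg matrix_polyfun_mult matrix_polyfun_var
      equivariant_mult equivariant_var)

definition same_invariants :: "(nat \<Rightarrow> 'a::field mat2) \<Rightarrow> (nat \<Rightarrow> 'a mat2) \<Rightarrow> bool" where
  "same_invariants u v \<longleftrightarrow> (\<forall>f \<in> inv_alg 3. f u = f v)"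

lemma same_invariants_sym: "same_invariants u v \<Longrightarrow> same_invariants v u"
  and same_invariants_trans: "same_invariants u v \<Longrightarrow> same_invariants v w \<Longrightarrow> same_invariants u w"
  unfolding same_invariants_def by metis+

lemma same_invariants_mat_conj:
  "u \<in> H 3 \<Longrightarrow> invertible g \<Longrightarrow> same_invariants u (\<lambda>k. mat_conj g (u k))"
  by (simp add: same_invariants_def inv_alg_def mat_conj_def)

lemma same_invariants_if_sim_conj3:
  assumes u: "u \<in> H 3" and v: "v \<in> H 3" and "sim_conj3 (u 0) (u 1) (u 2) (v 0) (v 1) (v 2)"
  shows "same_invariants u v"
proof -
  obtain g g' where g: "invertible g" "invertible g'"
    and "mat_conj g (u 0) = mat_conj g' (v 0)" "mat_conj g (u 1) = mat_conj g' (v 1)"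
      "mat_conj g (u 2) = mat_conj g' (v 2)"
    using assms(3) unfolding sim_conj3_def by blast
  then have "mat_conj g (u k) = mat_conj g' (v k)" if "k < 3" for k using less_3_cases[OF that] by auto
  moreover have "u k = 0" "v k = 0" if "\<not> k < 3" for k using u v that by (simp_all add: H_def)
  ultimately have "(\<lambda>k. mat_conj g (u k)) = (\<lambda>k. mat_conj g' (v k))"
    by (metis mat_conj_def times0_left times0_right)
  then show ?thesis using same_invariants_mat_conj[OF u g(1)] same_invariants_mat_conj[OF v g(2)]
    unfolding same_invariants_def by auto
qed

lemma trace_data_if_Sset_agree:
  assumes "\<forall>f\<in>Sset 3. f u = f v"
  shows "trace_data (u 0) (u 1) (u 2) = trace_data (v 0) (v 1) (v 2)"
proof -
  have agree: "f u = f v" if "f \<in> Sset 3" for f using assms that by blast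
  have "trace (u i) = trace (v i)" "det (u i) = det (v i)" if "i < 3" for i
    using agree[of "\<lambda>u. trace (u i)"] agree[of "\<lambda>u. det (u i)"] that unfolding Sset_def by blast+
  moreover have "trace (u i ** u j) = trace (v i ** v j)" if "i < j" "j < 3" for i j
    using agree[of "\<lambda>u. trace (u i ** u j)"] that unfolding Sset_def by blast
  moreover have "(\<lambda>u. trace (u 0 ** u 1 ** u 2)) \<in> (Sset 3 :: ((nat \<Rightarrow> 'a mat2) \<Rightarrow> 'a) set)"
    unfolding Sset_def by (intro UnI2 CollectI exI[of _ 0] exI[of _ 1] exI[of _ 2]) auto
  ultimately show ?thesis using agree by (simp add: trace_data_def)
qed

lemma trace_data_if_same_invariants:
  "same_invariants u v \<Longrightarrow> trace_data (u 0) (u 1) (u 2) = trace_data (v 0) (v 1) (v 2)"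
  using Sset_subset_inv_alg[of 3] by (intro trace_data_if_Sset_agree) (auto simp: same_invariants_def)

subsection \<open>Orbit closures\<close>

lemma polyfun_along_poly_curve:
  fixes w :: "'a::field \<Rightarrow> nat \<Rightarrow> 'a mat2"
  assumes "f \<in> polyfun d" and "\<And>k i j. \<exists>p. \<forall>t. w t k $ i $ j = poly p t"
  shows "\<exists>p. \<forall>t. f (w t) = poly p t"
  using assms(1)
proof (induction f rule: polyfun.induct)
  case (pf_const c)
  then show ?case by (intro exI[of _ "[:c:]"]) simp
next
  case (pf_var k i j)
  then show ?case using assms(2) by blast
next
  case (pf_add f g)
  then obtain p q where "\<forall>t. f (w t) = poly p t" "\<forall>t. g (w t) = poly q t" by blast
  then show ?case by (intro exI[of _ "p + q"]) simp
next
  case (pf_mult f g)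
  then obtain p q where "\<forall>t. f (w t) = poly p t" "\<forall>t. g (w t) = poly q t" by blast
  then show ?case by (intro exI[of _ "p * q"]) simp
qed

lemma poly_eq_const_at_0:
  assumes "infinite (UNIV :: 'a::field set)" and "\<And>t::'a. t \<noteq> 0 \<Longrightarrow> poly p t = c"
  shows "poly p 0 = c"
proof -
  have "UNIV - {0} \<subseteq> {t. poly (p - [:c:]) t = 0}" using assms(2) by auto
  moreover have "infinite (UNIV - {0::'a})" using assms(1) by simp
  ultimately have "infinite {t. poly (p - [:c:]) t = 0}" using finite_subset by blast
  then have "p - [:c:] = 0" using poly_roots_finite by blast
  then show ?thesis by (simp add: poly_pCons)
qed

text \<open>Conjugating an upper triangular tuple by \<open>diag2 1 t\<close> scales the off-diagonal entries by \<open>t\<close>;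
  an invariant is then a polynomial in \<open>t\<close> that is constant on the infinitely many \<open>t \<noteq> 0\<close>,
  hence also at \<open>t = 0\<close>, where the tuple is diagonal.\<close>

lemma same_invariants_diag_part:
  fixes u :: "nat \<Rightarrow> 'a::field mat2"
  assumes inf: "infinite (UNIV :: 'a set)" and u: "u \<in> H 3" and tri: "\<And>k. u k $ 2 $ 1 = 0"
  shows "same_invariants u (\<lambda>k. diag2 (u k $ 1 $ 1) (u k $ 2 $ 2))"
proof -
  define w where "w t = (\<lambda>k. mat2_of (u k $ 1 $ 1) (t * u k $ 1 $ 2) 0 (u k $ 2 $ 2))" for t :: 'a
  have "w t = (\<lambda>k. mat_conj (diag2 1 t) (u k))" if "t \<noteq> 0" for t
  proof -
    have "invertible (diag2 1 t)" using that by (simp add: diag2_def invertible_det_nz det_2)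
    then show ?thesis
      by (intro ext mat_conj_eqI[symmetric]) (simp_all add: w_def diag2_def mat2_eq_iff tri)
  qed
  then have wt: "f (w t) = f u" if "f \<in> inv_alg 3" "t \<noteq> 0" for f t
    using that u by (simp add: inv_alg_def diag2_def invertible_det_nz det_2 mat_conj_def)
  have entries: "\<exists>p. \<forall>t. w t k $ i $ j = poly p t" for k i j
  proof -
    have "i = 1 \<or> i = 2" "j = 1 \<or> j = 2" using exhaust_2 by blast+
    then show ?thesis
    proof (elim disjE)
      assume "i = 1" "j = 2"
      then show ?thesis by (intro exI[of _ "[:0, u k $ 1 $ 2:]"]) (simp add: w_def mult.commute)
    qed (auto simp: w_def intro: exI[of _ "[:_:]"])
  qed
  have "f u = f (w 0)" if f: "f \<in> inv_alg 3" for f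
  proof -
    have "f \<in> polyfun 3" using f by (simp add: inv_alg_def)
    then obtain p where p: "\<forall>t. f (w t) = poly p t" using polyfun_along_poly_curve entries by blast
    then have "poly p 0 = f u" using poly_eq_const_at_0[OF inf] wt[OF f] by metis
    then show ?thesis using p by simp
  qed
  moreover have "w 0 = (\<lambda>k. diag2 (u k $ 1 $ 1) (u k $ 2 $ 2))" by (simp add: w_def diag2_def)
  ultimately show ?thesis by (simp add: same_invariants_def)
qed

lemma basis_completion:
  fixes x :: "'a::field^2"
  assumes "x \<noteq> 0"
  shows "\<exists>y. det (mat_of_cols x y) \<noteq> 0"
proof (cases "x$1 = 0")
  case True
  then have "x$2 \<noteq> 0" using assms by (simp add: vec2_eq_iff)
  then show ?thesis by (intro exI[of _ "vector [1, 0]"]) (simp add: det_2)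
next
  case False
  then show ?thesis by (intro exI[of _ "vector [0, 1]"]) (simp add: det_2)
qed

lemma triangularizable_if_common_eigvec:
  fixes u :: "nat \<Rightarrow> 'a::field mat2"
  assumes u: "u \<in> H 3" and "common_eigvec (u 0) (u 1) (u 2)"
  shows "\<exists>g. invertible g \<and> (\<forall>k. mat_conj g (u k) $ 2 $ 1 = 0)"
proof -
  obtain x where "eigvec (u 0) x" "eigvec (u 1) x" "eigvec (u 2) x"
    using assms(2) by (auto simp: common_eigvec_def)
  then have x: "eigvec (u k) x" if "k < 3" for k using less_3_cases[OF that] by auto
  have "x \<noteq> 0" using x[of 0] by (simp add: eigvec_def)
  then obtain y where "det (mat_of_cols x y) \<noteq> 0" using basis_completion by blast
  then have g: "invertible (mat_of_cols x y)" by (simp add: invertible_det_nz)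
  have "mat_conj (mat_of_cols x y) (u k) $ 2 $ 1 = 0" for k
  proof (cases "k < 3")
    case True
    then obtain \<mu> where "u k *v x = \<mu> *s x + 0 *s y" using x by (auto simp: eigvec_def)
    then show ?thesis by (rule mat_conj_mat_of_cols_col1(2)[OF g])
  next
    case False
    then show ?thesis using u by (simp add: H_def mat_conj_def)
  qed
  then show ?thesis using g by blast
qed

lemma same_invariants_diag_if_common_eigvec:
  fixes u :: "nat \<Rightarrow> 'a::field mat2"
  assumes inf: "infinite (UNIV :: 'a set)" and u: "u \<in> H 3" and "common_eigvec (u 0) (u 1) (u 2)"
  shows "\<exists>a d. (\<lambda>k. diag2 (a k) (d k)) \<in> H 3 \<and> same_invariants u (\<lambda>k. diag2 (a k) (d k))"
proof -
  obtain g where g: "invertible g" and tri: "\<And>k. mat_conj g (u k) $ 2 $ 1 = 0"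
    using triangularizable_if_common_eigvec[OF u assms(3)] by blast
  define w where "w = (\<lambda>k. mat_conj g (u k))"
  have w: "w \<in> H 3" using u by (simp add: H_def w_def mat_conj_def)
  have "same_invariants u w" "same_invariants w (\<lambda>k. diag2 (w k $ 1 $ 1) (w k $ 2 $ 2))"
    using same_invariants_mat_conj[OF u g] same_invariants_diag_part[OF inf w] tri
    by (simp_all add: w_def)
  moreover have "(\<lambda>k. diag2 (w k $ 1 $ 1) (w k $ 2 $ 2)) \<in> H 3"
    using w by (simp add: H_def diag2_def mat2_eq_iff)
  ultimately show ?thesis unfolding same_invariants_def
    by (intro exI[of _ "\<lambda>k. w k $ 1 $ 1"] exI[of _ "\<lambda>k. w k $ 2 $ 2"]) auto
qed

theorem same_invariants_if_trace_data_eq: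
  fixes u v :: "nat \<Rightarrow> 'a::field mat2"
  assumes inf: "infinite (UNIV :: 'a set)" and u: "u \<in> H 3" and v: "v \<in> H 3"
    and td: "trace_data (u 0) (u 1) (u 2) = trace_data (v 0) (v 1) (v 2)"
  shows "same_invariants u v"
proof (cases "singular_commutators (u 0) (u 1) (u 2)")
  case False
  then show ?thesis using same_invariants_if_sim_conj3[OF u v]
      sim_conj3_if_not_singular_commutators[OF td] by blast
next
  case s: True
  then have s': "singular_commutators (v 0) (v 1) (v 2)" using singular_commutators_trace_data[OF td] by simp
  show ?thesis
  proof (cases "common_eigvec (u 0) (u 1) (u 2)")
    case True
    obtain a d where diag: "(\<lambda>k. diag2 (a k) (d k)) \<in> H 3"
      and inv: "same_invariants u (\<lambda>k. diag2 (a k) (d k))"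
      using same_invariants_diag_if_common_eigvec[OF inf u True] by blast
    have "common_eigvec (v 0) (v 1) (v 2)" using common_eigvec_trace_data[OF td s True] .
    then obtain a' d' where diag': "(\<lambda>k. diag2 (a' k) (d' k)) \<in> H 3"
      and inv': "same_invariants v (\<lambda>k. diag2 (a' k) (d' k))"
      using same_invariants_diag_if_common_eigvec[OF inf v] by blast
    have "trace_data (diag2 (a 0) (d 0)) (diag2 (a 1) (d 1)) (diag2 (a 2) (d 2))
      = trace_data (diag2 (a' 0) (d' 0)) (diag2 (a' 1) (d' 1)) (diag2 (a' 2) (d' 2))"
      using td trace_data_if_same_invariants[OF inv] trace_data_if_same_invariants[OF inv'] by simp
    then have "same_invariants (\<lambda>k. diag2 (a k) (d k)) (\<lambda>k. diag2 (a' k) (d' k))"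
      using same_invariants_if_sim_conj3[OF diag diag'] sim_conj3_diag2 by blast
    then show ?thesis using inv inv' same_invariants_sym same_invariants_trans by metis
  next
    case False
    then have "\<not> common_eigvec (v 0) (v 1) (v 2)" using common_eigvec_trace_data[OF td[symmetric] s'] by blast
    then show ?thesis
      using same_invariants_if_sim_conj3[OF u v] sim_conj3_if_no_common_eigvec[OF td s False] by blast
  qed
qed

subsection \<open>Separation and minimality\<close>

lemma Sset_cases:
  assumes "s \<in> Sset d"
  obtains (trace) i where "i < d" "s = (\<lambda>u. trace (u i))"
    | (det) i where "i < d" "s = (\<lambda>u. det (u i))"
    | (trace2) i j where "i < j" "j < d" "s = (\<lambda>u. trace (u i ** u j))"
    | (trace3) i j k where "i < j" "j < k" "k < d" "s = (\<lambda>u. trace (u i ** u j ** u k))"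
  using assms unfolding Sset_def by blast

lemma Sset_agree_mono:
  fixes u v :: "nat \<Rightarrow> 'a::field mat2"
  assumes u: "u \<in> H d" and v: "v \<in> H d" and agree: "\<forall>f\<in>Sset d. f u = f v"
  shows "\<forall>f\<in>Sset e. f u = f v"
proof
  fix f :: "(nat \<Rightarrow> 'a mat2) \<Rightarrow> 'a" assume "f \<in> Sset e"
  have zero: "u k = 0" "v k = 0" if "\<not> k < d" for k using u v that by (simp_all add: H_def)
  from \<open>f \<in> Sset e\<close> have "f \<in> Sset d \<or> f u = f v"
  proof (cases rule: Sset_cases)
    case (trace i)
    then show ?thesis unfolding Sset_def by (cases "i < d") (blast, simp add: zero)
  next
    case (det i)
    then show ?thesis unfolding Sset_def by (cases "i < d") (blast, simp add: zero)
  next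
    case (trace2 i j)
    then show ?thesis unfolding Sset_def by (cases "j < d") (blast, simp add: zero)
  next
    case (trace3 i j k)
    then show ?thesis unfolding Sset_def by (cases "k < d") (blast, simp add: zero)
  qed
  then show "f u = f v" using agree by blast
qed

lemma Sset_separating:
  assumes inf: "infinite (UNIV :: 'a::field set)" and "d \<le> 3"
  shows "separating d (Sset d :: ((nat \<Rightarrow> 'a mat2) \<Rightarrow> 'a) set)"
proof -
  have "separated_by (Sset d) u v"
    if u: "u \<in> H d" and v: "v \<in> H d" and sep: "separated_by (inv_alg d) u v" for u v :: "nat \<Rightarrow> 'a mat2"
  proof (rule ccontr)
    assume "\<not> separated_by (Sset d) u v"
    then have "\<forall>f\<in>Sset 3. f u = f v" using Sset_agree_mono[OF u v] by (simp add: separated_by_def)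
    moreover have "u \<in> H 3" "v \<in> H 3" using u v assms(2) by (auto simp: H_def)
    ultimately have "same_invariants u v"
      using same_invariants_if_trace_data_eq[OF inf] trace_data_if_Sset_agree by blast
    then show False using sep inv_alg_mono[OF _ assms(2)] by (auto simp: separated_by_def same_invariants_def)
  qed
  then show ?thesis using Sset_subset_inv_alg by (auto simp: separating_def)
qed

lemma Sset_member_isolated:
  fixes s :: "(nat \<Rightarrow> 'a::field mat2) \<Rightarrow> 'a"
  assumes "s \<in> Sset d" "d \<le> 3"
  shows "\<exists>u v. u \<in> H d \<and> v \<in> H d \<and> s u \<noteq> s v \<and> (\<forall>s'\<in>Sset d. s' u \<noteq> s' v \<longrightarrow> s' = s)"
  using assms(1)
proof (cases rule: Sset_cases)
  case (trace i)
  let ?u = "\<lambda>k. 0 :: 'a mat2" and ?v = "\<lambda>k. if k = i then mat2_of 1 0 0 0 else 0 :: 'a mat2"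
  have "?u \<in> H d" "?v \<in> H d" "s ?u \<noteq> s ?v" using trace by (auto simp: H_def trace_mat2)
  moreover have "s' = s" if "s' \<in> Sset d" "s' ?u \<noteq> s' ?v" for s'
    using that(1) by (cases rule: Sset_cases) (use that(2) trace in \<open>auto simp: mat2_simps split: if_splits\<close>)
  ultimately show ?thesis by blast
next
  case (det i)
  let ?u = "\<lambda>k. 0 :: 'a mat2" and ?v = "\<lambda>k. if k = i then mat2_of 0 1 1 0 else 0 :: 'a mat2"
  have "?u \<in> H d" "?v \<in> H d" "s ?u \<noteq> s ?v" using det by (auto simp: H_def det_2)
  moreover have "s' = s" if "s' \<in> Sset d" "s' ?u \<noteq> s' ?v" for s'
    using that(1) by (cases rule: Sset_cases) (use that(2) det in \<open>auto simp: mat2_simps split: if_splits\<close>)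
  ultimately show ?thesis by blast
next
  case (trace2 i j)
  let ?u = "\<lambda>k. if k = i then mat2_of 0 1 0 0 else if k = j then mat2_of 0 0 1 0 else 0 :: 'a mat2"
    and ?v = "\<lambda>k. if k = i \<or> k = j then mat2_of 0 1 0 0 else 0 :: 'a mat2"
  have "?u \<in> H d" "?v \<in> H d" "s ?u \<noteq> s ?v" using trace2 by (auto simp: H_def trace_mat2)
  moreover have "s' = s" if "s' \<in> Sset d" "s' ?u \<noteq> s' ?v" for s'
    using that(1) by (cases rule: Sset_cases) (use that(2) trace2 in \<open>auto simp: mat2_simps split: if_splits\<close>)
  ultimately show ?thesis by blast
next
  case (trace3 i j k)
  then have ijk: "i = 0" "j = 1" "k = 2" "d = 3" using assms(2) by auto
  let ?u = "\<lambda>k. if k = 0 then mat2_of 1 0 0 0 else if k = 1 then mat2_of 0 1 0 0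
      else if k = 2 then mat2_of 0 0 1 0 else 0 :: 'a mat2"
    and ?v = "\<lambda>k. if k = 0 then mat2_of 1 0 0 0 else if k = 1 then mat2_of 0 0 1 0
      else if k = 2 then mat2_of 0 1 0 0 else 0 :: 'a mat2"
  have "?u \<in> H d" "?v \<in> H d" "s ?u \<noteq> s ?v" using trace3 ijk by (auto simp: H_def trace_mat2)
  moreover have "s' = s" if "s' \<in> Sset d" "s' ?u \<noteq> s' ?v" for s'
    using that(1)
  proof (cases rule: Sset_cases)
    case (trace3 i' j' k')
    then have "i' = 0" "j' = 1" "k' = 2" using ijk by auto
    with trace3(4) show ?thesis using \<open>s = (\<lambda>u. trace (u i ** u j ** u k))\<close> ijk by simp
  qed (use that(2) ijk in \<open>auto simp: mat2_simps split: if_splits\<close>)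
  ultimately show ?thesis by blast
qed

theorem lemma2:
  assumes "infinite (UNIV :: 'a::field set)"
    and "d \<in> {1, 2, 3}"
  shows "minimal_separating d (Sset d :: ((nat \<Rightarrow> 'a mat2) \<Rightarrow> 'a) set)"
proof -
  have d: "d \<le> 3" using assms(2) by auto
  have "\<not> separating d S'" if S': "S' \<subset> (Sset d :: ((nat \<Rightarrow> 'a mat2) \<Rightarrow> 'a) set)" for S'
  proof
    assume sep: "separating d S'"
    obtain s where s: "s \<in> Sset d" "s \<notin> S'" using S' by blast
    obtain u v where uv: "u \<in> H d" "v \<in> H d" "s u \<noteq> s v" and only_s: "\<forall>s'\<in>Sset d. s' u \<noteq> s' v \<longrightarrow> s' = s"
      using Sset_member_isolated[OF s(1) d] by blast
    have "separated_by (inv_alg d) u v" using Sset_subset_inv_alg s(1) uv(3) by (auto simp: separated_by_def)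
    then have "separated_by S' u v" using sep uv(1,2) by (simp add: separating_def)
    then obtain s' where "s' \<in> S'" "s' u \<noteq> s' v" by (auto simp: separated_by_def)
    then show False using only_s S' s(2) by blast
  qed
  then show ?thesis using Sset_separating[OF assms(1) d] by (simp add: minimal_separating_def)
qed

end
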